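(* Let $M,M'\in\mathrm{Mat}(2,\mathbb{Z})$ be such that their reductions mod $n$ are $\mathrm{Mat}(2,\mathbb{Z}_n)^\times$-conjugate for some $n\ge2$. Then $\det(M)\equiv\det(M')$ and $\mathrm{trace}(M)\equiv\mathrm{trace}(M')$ mod $n$, and the matrix gcds $r=\mathrm{mgcd}(M)$, $r'=\mathrm{mgcd}(M')$ generate the same ideal in $\mathbb{Z}_n$, i.e. $r\,\mathbb{Z}_n=r'\,\mathbb{Z}_n$.
   Context: For $M=\begin{pmatrix}a&b\\c&d\end{pmatrix}$, $\mathrm{mgcd}(M)=\gcd(b,c,d-a)\ge0$. $\mathrm{Mat}(2,\mathbb{Z}_n)^\times$ is the group of invertible $2\times2$ matrices over $\mathbb{Z}_n=\mathbb{Z}/n\mathbb{Z}$. *)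

theory Defs
  imports "HOL-Analysis.Analysis" "HOL-Number_Theory.Cong"
begin

definition mat_cong :: "int \<Rightarrow> int^2^2 \<Rightarrow> int^2^2 \<Rightarrow> bool" where
  "mat_cong n A B \<longleftrightarrow> (\<forall>i j. [A $ i $ j = B $ i $ j] (mod n))"

text \<open>Reductions mod n are conjugate by an element of GL(2,Z_n): there is an integer matrix P
  whose reduction is invertible mod n (equivalently det P is a unit mod n) with
  P^{-1} M P = M' mod n, i.e. M P = P M' mod n.\<close>
definition conj_mod :: "int \<Rightarrow> int^2^2 \<Rightarrow> int^2^2 \<Rightarrow> bool" where
  "conj_mod n M M' \<longleftrightarrow> (\<exists>P Q :: int^2^2. mat_cong n (P ** Q) (mat 1) \<and> mat_cong n (Q ** P) (mat 1)
      \<and> mat_cong n (Q ** M ** P) M')"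

definition mgcd :: "int^2^2 \<Rightarrow> int" where
  "mgcd M = gcd (M $ 1 $ 2) (gcd (M $ 2 $ 1) (M $ 2 $ 2 - M $ 1 $ 1))"

text \<open>The ideal r Z_n, as a subset of Z_n represented by {0..n-1}.\<close>
definition ideal_mod :: "int \<Rightarrow> int \<Rightarrow> int set" where
  "ideal_mod n r = {(r * x) mod n | x. True}"

end

theory Submission
  imports Defs
begin

text \<open>Determinant and trace are conjugation invariants, and congruences of matrices mod n
  induce congruences of their determinants and traces. For the matrix gcd, let d = gcd(mgcd M, n).
  Modulo d the matrix M is the scalar matrix a I with a = M_11; conjugating a scalar matrix
  gives it back, so M' is scalar mod d as well, i.e. d divides mgcd M'. Since d generates the
  ideal (mgcd M) Z_n, this gives one inclusion of ideals, and conjugacy is symmetric.\<close>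

lemma matrix_mult_2_entry:
  "((A::int^2^2) ** B) $ i $ j = A$i$1 * B$1$j + A$i$2 * B$2$j"
  by (simp add: matrix_matrix_mult_def sum_2)

lemma mat_cong_refl: "mat_cong n A A"
  by (simp add: mat_cong_def)

lemma mat_cong_sym: "mat_cong n A B \<Longrightarrow> mat_cong n B A"
  by (simp add: mat_cong_def cong_sym)

lemma mat_cong_trans: "mat_cong n A B \<Longrightarrow> mat_cong n B C \<Longrightarrow> mat_cong n A C"
  unfolding mat_cong_def by (meson cong_trans)

lemma mat_cong_mult:
  "mat_cong n A A' \<Longrightarrow> mat_cong n B B' \<Longrightarrow> mat_cong n (A ** B) (A' ** B')"
  unfolding mat_cong_def matrix_mult_2_entry
  by (intro allI cong_add cong_mult) auto

lemma mat_cong_dvd_modulus: "mat_cong n A B \<Longrightarrow> d dvd n \<Longrightarrow> mat_cong d A B"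
  unfolding mat_cong_def by (meson cong_dvd_modulus)

lemma mat_cong_det: "mat_cong n A B \<Longrightarrow> [det A = det B] (mod n)"
  unfolding mat_cong_def det_2
  by (intro cong_diff cong_mult) auto

lemma mat_cong_trace: "mat_cong n A B \<Longrightarrow> [trace A = trace B] (mod n)"
  unfolding mat_cong_def trace_def sum_2
  by (intro cong_add) auto

lemma conj_mod_sym:
  assumes "conj_mod n M M'"
  shows "conj_mod n M' M"
proof -
  obtain P Q where pq: "mat_cong n (P ** Q) (mat 1)" and qp: "mat_cong n (Q ** P) (mat 1)"
    and c: "mat_cong n (Q ** M ** P) M'"
    using assms unfolding conj_mod_def by blast
  have "mat_cong n (P ** M' ** Q) (P ** (Q ** M ** P) ** Q)"
    by (intro mat_cong_mult mat_cong_refl mat_cong_sym[OF c])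
  also have "P ** (Q ** M ** P) ** Q = (P ** Q) ** M ** (P ** Q)"
    by (simp add: matrix_mul_assoc)
  finally have "mat_cong n (P ** M' ** Q) ((P ** Q) ** M ** (P ** Q))" .
  moreover have "mat_cong n ((P ** Q) ** M ** (P ** Q)) (mat 1 ** M ** mat 1)"
    by (intro mat_cong_mult mat_cong_refl pq)
  ultimately have "mat_cong n (P ** M' ** Q) M"
    using mat_cong_trans by fastforce
  with pq qp show ?thesis
    unfolding conj_mod_def by blast
qed

lemma conj_mod_dvd_modulus: "conj_mod n M M' \<Longrightarrow> d dvd n \<Longrightarrow> conj_mod d M M'"
  unfolding conj_mod_def by (meson mat_cong_dvd_modulus)

lemma conj_mod_det: "conj_mod n M M' \<Longrightarrow> [det M = det M'] (mod n)"
proof -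
  assume "conj_mod n M M'"
  then obtain P Q where qp: "mat_cong n (Q ** P) (mat 1)" and c: "mat_cong n (Q ** M ** P) M'"
    unfolding conj_mod_def by blast
  have "det (Q ** M ** P) = det M * det (Q ** P)"
    by (simp add: det_mul)
  also have "[det M * det (Q ** P) = det M * det (mat 1 :: int^2^2)] (mod n)"
    using mat_cong_det[OF qp] by (rule cong_scalar_left)
  finally show ?thesis
    using mat_cong_det[OF c] by (metis cong_sym cong_trans det_I mult_1_right)
qed

lemma conj_mod_trace: "conj_mod n M M' \<Longrightarrow> [trace M = trace M'] (mod n)"
proof -
  assume "conj_mod n M M'"
  then obtain P Q where pq: "mat_cong n (P ** Q) (mat 1)" and c: "mat_cong n (Q ** M ** P) M'"
    unfolding conj_mod_def by blast
  have "trace (Q ** M ** P) = trace (M ** (P ** Q))"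
    by (metis matrix_mul_assoc trace_mul_sym)
  also have "[trace (M ** (P ** Q)) = trace (M ** mat 1)] (mod n)"
    by (intro mat_cong_trace mat_cong_mult mat_cong_refl pq)
  finally show ?thesis
    using mat_cong_trace[OF c] by (metis cong_sym cong_trans matrix_mul_rid)
qed

lemma dvd_mgcd_iff_mat_cong_scalar:
  "d dvd mgcd M \<longleftrightarrow> (\<exists>a. mat_cong d M (mat a))"
proof -
  have "mat_cong d M (mat a) \<longleftrightarrow> [M$1$1 = a] (mod d) \<and> [M$2$2 = a] (mod d)
      \<and> [M$1$2 = 0] (mod d) \<and> [M$2$1 = 0] (mod d)" for a
    unfolding mat_cong_def by (auto simp: mat_def forall_2)
  then have "(\<exists>a. mat_cong d M (mat a)) \<longleftrightarrow>
      [M$1$2 = 0] (mod d) \<and> [M$2$1 = 0] (mod d) \<and> [M$2$2 = M$1$1] (mod d)"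
    by (meson cong_refl cong_sym cong_trans)
  then show ?thesis
    by (simp add: mgcd_def cong_0_iff cong_iff_dvd_diff)
qed

lemma conj_mod_scalar:
  assumes "conj_mod n M M'" and "mat_cong n M (mat a)"
  shows "mat_cong n M' (mat a)"
proof -
  obtain P Q where qp: "mat_cong n (Q ** P) (mat 1)" and c: "mat_cong n (Q ** M ** P) M'"
    using assms(1) unfolding conj_mod_def by blast
  have scalar_mult: "(Q ** mat a ** P) $ i $ j = a * (Q ** P) $ i $ j" for i j
    by (simp add: matrix_mult_2_entry mat_def algebra_simps)
  have scalar_entry: "(mat a :: int^2^2) $ i $ j = a * (mat 1 :: int^2^2) $ i $ j" for i j
    by (simp add: mat_def)
  have "mat_cong n (Q ** M ** P) (Q ** mat a ** P)"
    by (intro mat_cong_mult mat_cong_refl assms(2))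
  moreover have "mat_cong n (Q ** mat a ** P) (mat a)"
    using qp unfolding mat_cong_def scalar_mult scalar_entry by (simp add: cong_scalar_left)
  ultimately show ?thesis
    using c mat_cong_sym mat_cong_trans by blast
qed

lemma conj_mod_gcd_dvd_mgcd:
  assumes "conj_mod n M M'"
  shows "gcd (mgcd M) n dvd mgcd M'"
proof -
  let ?d = "gcd (mgcd M) n"
  have "conj_mod ?d M M'"
    using assms by (rule conj_mod_dvd_modulus) simp
  moreover obtain a where "mat_cong ?d M (mat a)"
    using dvd_mgcd_iff_mat_cong_scalar by blast
  ultimately have "mat_cong ?d M' (mat a)"
    by (rule conj_mod_scalar)
  then show ?thesis
    using dvd_mgcd_iff_mat_cong_scalar by blast
qed

lemma ideal_mod_subset: "gcd r n dvd r' \<Longrightarrow> ideal_mod n r' \<subseteq> ideal_mod n r"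
proof
  fix z assume "gcd r n dvd r'" and "z \<in> ideal_mod n r'"
  then obtain k x where r': "r' = gcd r n * k" and z: "z = (r' * x) mod n"
    unfolding ideal_mod_def by blast
  obtain u v where uv: "u * r + v * n = gcd r n"
    using bezout_int by blast
  have "z = (r * (u * k * x) + n * (v * k * x)) mod n"
    unfolding z r' uv[symmetric] by (simp add: algebra_simps)
  also have "\<dots> = (r * (u * k * x)) mod n"
    by simp
  finally show "z \<in> ideal_mod n r"
    unfolding ideal_mod_def by blast
qed

theorem proposition40:
  fixes M M' :: "int^2^2" and n :: int
  assumes "n \<ge> 2" and "conj_mod n M M'"
  shows "[det M = det M'] (mod n) \<and> [trace M = trace M'] (mod n)
         \<and> ideal_mod n (mgcd M) = ideal_mod n (mgcd M')"
proof -
  have "ideal_mod n (mgcd M') \<subseteq> ideal_mod n (mgcd M)"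
    using assms(2) by (intro ideal_mod_subset conj_mod_gcd_dvd_mgcd)
  moreover have "ideal_mod n (mgcd M) \<subseteq> ideal_mod n (mgcd M')"
    using conj_mod_sym[OF assms(2)] by (intro ideal_mod_subset conj_mod_gcd_dvd_mgcd)
  ultimately show ?thesis
    using conj_mod_det[OF assms(2)] conj_mod_trace[OF assms(2)] by blast
qed

end
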